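(* Let $H\in\mathbb{H}^{n\times n}$ be an invertible Hermitian quaternion matrix and let $X\in\mathbb{H}^{n\times n}$. Then $X$ admits an $H$-polar decomposition $X=UA$, with $U$ $H$-unitary and $A$ $H$-selfadjoint, if and only if there exists an $H$-selfadjoint matrix $A\in\mathbb{H}^{n\times n}$ with $A^2=X^{[*]}X$ and $\mathrm{Ker}\,X=\mathrm{Ker}\,A$.
   Context: $\mathbb{H}$ denotes the real quaternions, $\mathbb{H}^n$ is a right vector space, and $A^*$ is the conjugate transpose. The indefinite inner product is $[x,y]=y^*Hx$. The $H$-adjoint of $X$ is $X^{[*]}=H^{-1}X^*H$. A matrix $A$ is $H$-selfadjoint if $A^{[*]}=A$; a matrix $U$ is $H$-unitary if $U^*HU=H$. An $H$-polar decomposition of $X$ is a factorization $X=UA$ with $U$ $H$-unitary and $A$ $H$-selfadjoint. *)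

theory Defs
  imports "HOL-Analysis.Analysis"
begin

datatype quat = Quat (Re: real) (Im1: real) (Im2: real) (Im3: real)

lemma quat_eqI: "Re x = Re y \<Longrightarrow> Im1 x = Im1 y \<Longrightarrow> Im2 x = Im2 y \<Longrightarrow> Im3 x = Im3 y \<Longrightarrow> x = y"
  by (cases x; cases y) simp

instantiation quat :: ring_1
begin

definition "0 = Quat 0 0 0 0"
definition "1 = Quat 1 0 0 0"
definition "x + y = Quat (Re x + Re y) (Im1 x + Im1 y) (Im2 x + Im2 y) (Im3 x + Im3 y)"
definition "x - y = Quat (Re x - Re y) (Im1 x - Im1 y) (Im2 x - Im2 y) (Im3 x - Im3 y)"
definition "- x = Quat (- Re x) (- Im1 x) (- Im2 x) (- Im3 x)"
definition "x * y = Quat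
   (Re x * Re y - Im1 x * Im1 y - Im2 x * Im2 y - Im3 x * Im3 y)
   (Re x * Im1 y + Im1 x * Re y + Im2 x * Im3 y - Im3 x * Im2 y)
   (Re x * Im2 y - Im1 x * Im3 y + Im2 x * Re y + Im3 x * Im1 y)
   (Re x * Im3 y + Im1 x * Im2 y - Im2 x * Im1 y + Im3 x * Re y)"

instance
  by standard (auto intro!: quat_eqI simp: zero_quat_def one_quat_def plus_quat_def
      minus_quat_def uminus_quat_def times_quat_def algebra_simps)

end

definition qcnj :: "quat \<Rightarrow> quat" where
  "qcnj x = Quat (Re x) (- Im1 x) (- Im2 x) (- Im3 x)"

definition cstar :: "quat^'n^'m \<Rightarrow> quat^'m^'n" where
  "cstar A = (\<chi> i j. qcnj (A $ j $ i))"

definition hadj :: "quat^'n^'n \<Rightarrow> quat^'n^'n \<Rightarrow> quat^'n^'n" where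
  "hadj H X = matrix_inv H ** cstar X ** H"

definition H_selfadjoint :: "quat^'n^'n \<Rightarrow> quat^'n^'n \<Rightarrow> bool" where
  "H_selfadjoint H A \<longleftrightarrow> hadj H A = A"

definition H_unitary :: "quat^'n^'n \<Rightarrow> quat^'n^'n \<Rightarrow> bool" where
  "H_unitary H U \<longleftrightarrow> cstar U ** H ** U = H"

definition H_polar_decomposition :: "quat^'n^'n \<Rightarrow> quat^'n^'n \<Rightarrow> quat^'n^'n \<Rightarrow> quat^'n^'n \<Rightarrow> bool" where
  "H_polar_decomposition H X U A \<longleftrightarrow> H_unitary H U \<and> H_selfadjoint H A \<and> X = U ** A"

definition qker :: "quat^'n^'m \<Rightarrow> (quat^'n) set" where
  "qker A = {x. A *v x = 0}"

end

theory Submission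
  imports Defs
begin

(* If X = UA is an H-polar decomposition, then X^[*]X = A^[*]U^[*]UA = A^2 and U is injective,
   so Ker X = Ker A. Conversely, A^2 = X^[*]X with A H-selfadjoint says [Ax, Ay] = [Xx, Xy] for all
   x, y, and Ker A = Ker X makes Ax -> Xx a well-defined isometry from Range A onto Range X. Witt's
   extension theorem for the nondegenerate Hermitian form [x, y] = y^*Hx extends it to an H-unitary
   U, and then UA = X.

   Witt's theorem is proved by induction on the dimension of a nondegenerate right subspace V
   containing both families. If the span of the source family contains a non-isotropic vector p,
   a product of elementary isometries x -> x + v s [x, v] (reflections and unit rotations) moves p
   onto the corresponding vector of the target, and one recurses into the orthogonal complement of
   p in V. If the source span is totally isotropic, one adjoins isotropic partners of one of its
   vectors to both families, matching all inner products by solving a consistent linear system;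
   this creates a non-isotropic vector without changing V. *)

section \<open>Quaternions\<close>

lemma quat_eq_iff: "x = y \<longleftrightarrow> Re x = Re y \<and> Im1 x = Im1 y \<and> Im2 x = Im2 y \<and> Im3 x = Im3 y"
  by (auto intro: quat_eqI)

lemma quat_simps [simp]:
  "Re 0 = 0" "Im1 0 = 0" "Im2 0 = 0" "Im3 0 = 0"
  "Re 1 = 1" "Im1 1 = 0" "Im2 1 = 0" "Im3 1 = 0"
  "Re (x + y) = Re x + Re y" "Im1 (x + y) = Im1 x + Im1 y"
  "Im2 (x + y) = Im2 x + Im2 y" "Im3 (x + y) = Im3 x + Im3 y"
  "Re (x - y) = Re x - Re y" "Im1 (x - y) = Im1 x - Im1 y"
  "Im2 (x - y) = Im2 x - Im2 y" "Im3 (x - y) = Im3 x - Im3 y"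
  "Re (- x) = - Re x" "Im1 (- x) = - Im1 x" "Im2 (- x) = - Im2 x" "Im3 (- x) = - Im3 x"
  "Re (x * y) = Re x * Re y - Im1 x * Im1 y - Im2 x * Im2 y - Im3 x * Im3 y"
  "Im1 (x * y) = Re x * Im1 y + Im1 x * Re y + Im2 x * Im3 y - Im3 x * Im2 y"
  "Im2 (x * y) = Re x * Im2 y - Im1 x * Im3 y + Im2 x * Re y + Im3 x * Im1 y"
  "Im3 (x * y) = Re x * Im3 y + Im1 x * Im2 y - Im2 x * Im1 y + Im3 x * Re y"
  by (simp_all add: zero_quat_def one_quat_def plus_quat_def minus_quat_def
      uminus_quat_def times_quat_def)

lemma qcnj_simps [simp]:
  "Re (qcnj x) = Re x" "Im1 (qcnj x) = - Im1 x" "Im2 (qcnj x) = - Im2 x" "Im3 (qcnj x) = - Im3 x"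
  by (simp_all add: qcnj_def)

instantiation quat :: real_vector
begin

definition scaleR_quat_def: "r *\<^sub>R x = Quat (r * Re x) (r * Im1 x) (r * Im2 x) (r * Im3 x)"

instance
  by standard (simp_all add: scaleR_quat_def quat_eq_iff algebra_simps)

end

lemma scaleR_quat_simps [simp]:
  "Re (r *\<^sub>R x) = r * Re x" "Im1 (r *\<^sub>R x) = r * Im1 x"
  "Im2 (r *\<^sub>R x) = r * Im2 x" "Im3 (r *\<^sub>R x) = r * Im3 x"
  by (simp_all add: scaleR_quat_def)

instance quat :: real_algebra_1
  by standard (simp_all add: quat_eq_iff algebra_simps)

lemma of_real_quat_simps [simp]:
  "Re (of_real r) = r" "Im1 (of_real r) = 0" "Im2 (of_real r) = 0" "Im3 (of_real r) = 0"
  by (simp_all add: of_real_def)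

instantiation quat :: real_inner
begin

definition inner_quat_def:
  "inner x y = Re x * Re y + Im1 x * Im1 y + Im2 x * Im2 y + Im3 x * Im3 y"
definition norm_quat_def: "norm x = sqrt (inner x x)" for x :: quat
definition sgn_quat_def: "sgn x = x /\<^sub>R norm x" for x :: quat
definition dist_quat_def: "dist x y = norm (x - y)" for x y :: quat
definition uniformity_quat_def:
  "(uniformity :: (quat \<times> quat) filter) = (INF e\<in>{0 <..}. principal {(x, y). dist x y < e})"
definition open_quat_def:
  "open (U :: quat set) \<longleftrightarrow> (\<forall>x\<in>U. eventually (\<lambda>(x', y). x' = x \<longrightarrow> y \<in> U) uniformity)"

instance
proof
  fix x y z :: quat and r :: real
  show "inner x y = inner y x" "inner (x + y) z = inner x z + inner y z"
    "inner (r *\<^sub>R x) y = r * inner x y" "0 \<le> inner x x" "norm x = sqrt (inner x x)"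
    by (simp_all add: inner_quat_def norm_quat_def algebra_simps)
  show "inner x x = 0 \<longleftrightarrow> x = 0"
    by (simp add: inner_quat_def quat_eq_iff add_nonneg_eq_0_iff)
qed (rule sgn_quat_def dist_quat_def open_quat_def uniformity_quat_def)+

end

lemma qcnj_qcnj [simp]: "qcnj (qcnj x) = x"
  by (simp add: quat_eq_iff)

lemma qcnj_add [simp]: "qcnj (x + y) = qcnj x + qcnj y"
  by (simp add: quat_eq_iff)

lemma qcnj_diff [simp]: "qcnj (x - y) = qcnj x - qcnj y"
  by (simp add: quat_eq_iff)

lemma qcnj_minus [simp]: "qcnj (- x) = - qcnj x"
  by (simp add: quat_eq_iff)

lemma qcnj_0 [simp]: "qcnj 0 = 0"
  by (simp add: quat_eq_iff)

lemma qcnj_1 [simp]: "qcnj 1 = 1"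
  by (simp add: quat_eq_iff)

lemma qcnj_of_real [simp]: "qcnj (of_real r) = of_real r"
  by (simp add: quat_eq_iff)

lemma qcnj_eq_0_iff [simp]: "qcnj x = 0 \<longleftrightarrow> x = 0"
  by (simp add: quat_eq_iff)

lemma qcnj_mult: "qcnj (x * y) = qcnj y * qcnj x"
  by (simp add: quat_eq_iff algebra_simps)

lemma qcnj_sum: "qcnj (sum f A) = (\<Sum>i\<in>A. qcnj (f i))"
  by (induction A rule: infinite_finite_induct) auto

lemma qcnj_mult_self: "qcnj x * x = of_real ((norm x)\<^sup>2)"
  by (simp add: quat_eq_iff power2_norm_eq_inner inner_quat_def algebra_simps)

lemma mult_qcnj_self: "x * qcnj x = of_real ((norm x)\<^sup>2)"
  by (simp add: quat_eq_iff power2_norm_eq_inner inner_quat_def algebra_simps)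

instantiation quat :: division_ring
begin

definition inverse_quat_def: "inverse x = (1 / (norm x)\<^sup>2) *\<^sub>R qcnj x" for x :: quat
definition divide_quat_def: "divide x y = x * inverse y" for x y :: quat

instance
proof
  fix x y :: quat
  assume "x \<noteq> 0"
  then show "inverse x * x = 1" "x * inverse x = 1"
    by (simp_all add: inverse_quat_def qcnj_mult_self mult_qcnj_self of_real_def)
qed (simp_all add: inverse_quat_def divide_quat_def)

end

instantiation quat :: euclidean_space
begin

definition Basis_quat_def: "Basis = {1, Quat 0 1 0 0, Quat 0 0 1 0, Quat 0 0 0 1}"

instance
proof
  fix x u v :: quat
  show "(Basis :: quat set) \<noteq> {}" "finite (Basis :: quat set)"
    by (simp_all add: Basis_quat_def)
  show "u \<in> Basis \<Longrightarrow> v \<in> Basis \<Longrightarrow> inner u v = (if u = v then 1 else 0)"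
    unfolding Basis_quat_def by (elim insertE emptyE; simp add: inner_quat_def quat_eq_iff)
  show "(\<forall>u\<in>Basis. inner x u = 0) \<longleftrightarrow> x = 0"
    unfolding Basis_quat_def by (simp add: inner_quat_def) (simp add: quat_eq_iff)
qed

end

lemma quat_eq_by_Re_mult:
  assumes "\<And>c. Re (a * c) = Re (b * c)"
  shows "a = b"
  using assms[of 1] assms[of "Quat 0 1 0 0"] assms[of "Quat 0 0 1 0"] assms[of "Quat 0 0 0 1"]
  by (simp add: quat_eq_iff)

lemma Re_sum: "Re (sum f A) = (\<Sum>i\<in>A. Re (f i))"
  by (induction A rule: infinite_finite_induct) auto

lemma qcnj_scaleR [simp]: "qcnj (r *\<^sub>R x) = r *\<^sub>R qcnj x"
  by (simp add: quat_eq_iff)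

lemma exists_unit_rotating_to_real: "\<exists>\<mu>. norm \<mu> = 1 \<and> qcnj \<mu> * g = of_real (norm g)"
proof (cases "g = 0")
  case False
  have "qcnj (sgn g) * g = (1 / norm g) *\<^sub>R (qcnj g * g)"
    by (simp add: sgn_div_norm divide_inverse_commute)
  also have "\<dots> = of_real (norm g)"
    using False by (simp add: qcnj_mult_self power2_eq_square of_real_def)
  finally show ?thesis
    using False by (intro exI[of _ "sgn g"]) (simp add: norm_sgn)
qed (intro exI[of _ 1]; simp add: norm_quat_def inner_quat_def)

lemma cstar_nth [simp]: "cstar A $ i $ j = qcnj (A $ j $ i)"
  by (simp add: cstar_def)

lemma cstar_mult: "cstar (A ** B) = cstar B ** cstar A"
  for A :: "quat^'n^'m" and B :: "quat^'k^'n"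
  by (simp add: vec_eq_iff matrix_matrix_mult_def qcnj_sum qcnj_mult)

lemma matrix_inv_cancel:
  assumes "invertible H"
  shows "H ** matrix_inv H = mat 1" "matrix_inv H ** H = mat 1"
proof -
  have "H ** matrix_inv H = mat 1 \<and> matrix_inv H ** H = mat 1"
    using assms unfolding invertible_def matrix_inv_def by (rule someI_ex)
  then show "H ** matrix_inv H = mat 1" "matrix_inv H ** H = mat 1"
    by auto
qed

definition rscale :: "quat^'n \<Rightarrow> quat \<Rightarrow> quat^'n" where
  "rscale x c = (\<chi> k. x $ k * c)"

lemma rscale_nth [simp]: "rscale x c $ k = x $ k * c"
  by (simp add: rscale_def)

lemma rscale_add_right: "rscale x (c + d) = rscale x c + rscale x d"
  by (simp add: vec_eq_iff algebra_simps)

lemma rscale_diff_left: "rscale (x - y) c = rscale x c - rscale y c"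
  by (simp add: vec_eq_iff algebra_simps)

lemma rscale_diff_right: "rscale x (c - d) = rscale x c - rscale x d"
  by (simp add: vec_eq_iff algebra_simps)

lemma rscale_minus_right: "rscale x (- c) = - rscale x c"
  by (simp add: vec_eq_iff)

lemma rscale_rscale [simp]: "rscale (rscale x c) d = rscale x (c * d)"
  by (simp add: vec_eq_iff mult.assoc)

lemma rscale_one [simp]: "rscale x 1 = x"
  by (simp add: vec_eq_iff)

lemma rscale_zero_right [simp]: "rscale x 0 = 0"
  by (simp add: vec_eq_iff)

lemma rscale_sum_right: "rscale x (sum f A) = (\<Sum>i\<in>A. rscale x (f i))"
  by (induction A rule: infinite_finite_induct) (auto simp: rscale_add_right)

lemma scaleR_eq_rscale: "r *\<^sub>R x = rscale x (of_real r)"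
  for x :: "quat^'n"
  by (simp add: vec_eq_iff quat_eq_iff)

lemma matrix_vector_mult_rscale: "M *v rscale x c = rscale (M *v x) c"
  by (simp add: vec_eq_iff matrix_vector_mult_def sum_distrib_right mult.assoc)

lemma matrix_vector_mult_sum: "M *v sum f A = (\<Sum>i\<in>A. M *v f i)"
  by (induction A rule: infinite_finite_induct) (auto simp: matrix_vector_right_distrib)

definition qinner :: "quat^'n \<Rightarrow> quat^'n \<Rightarrow> quat" where
  "qinner x y = (\<Sum>k\<in>UNIV. qcnj (y $ k) * x $ k)"

lemma inner_eq_Re_qinner: "inner x y = Re (qinner x y)"
  for x y :: "quat^'n"
  by (simp add: inner_vec_def qinner_def Re_sum inner_quat_def mult.commute)

lemma qinner_self_eq_0_iff [simp]: "qinner x x = 0 \<longleftrightarrow> x = 0"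
proof
  assume "qinner x x = 0"
  then have "inner x x = 0"
    by (simp add: inner_eq_Re_qinner)
  then show "x = 0"
    by simp
qed (simp add: qinner_def)

lemma qinner_rscale_left: "qinner (rscale x c) y = qinner x y * c"
  by (simp add: qinner_def sum_distrib_right mult.assoc)

lemma qinner_matrix_vector_mult_right: "qinner x (B *v y) = qinner (cstar B *v x) y"
proof -
  have "qinner x (B *v y) = (\<Sum>k\<in>UNIV. \<Sum>j\<in>UNIV. qcnj (y $ j) * qcnj (B $ k $ j) * x $ k)"
    by (simp add: qinner_def matrix_vector_mult_def qcnj_sum qcnj_mult sum_distrib_right)
  also have "\<dots> = (\<Sum>j\<in>UNIV. \<Sum>k\<in>UNIV. qcnj (y $ j) * qcnj (B $ k $ j) * x $ k)"
    by (rule sum.swap)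
  also have "\<dots> = qinner (cstar B *v x) y"
    by (simp add: qinner_def matrix_vector_mult_def sum_distrib_left mult.assoc)
  finally show ?thesis .
qed

definition hform :: "quat^'n^'n \<Rightarrow> quat^'n \<Rightarrow> quat^'n \<Rightarrow> quat" where
  "hform H x y = qinner (H *v x) y"

lemma hform_expand: "hform H x y = (\<Sum>k\<in>UNIV. \<Sum>j\<in>UNIV. qcnj (y $ k) * H $ k $ j * x $ j)"
  by (simp add: hform_def qinner_def matrix_vector_mult_def sum_distrib_left mult.assoc)

lemma hform_add_left: "hform H (x + y) z = hform H x z + hform H y z"
  by (simp add: hform_expand algebra_simps sum.distrib)

lemma hform_diff_left: "hform H (x - y) z = hform H x z - hform H y z"
  by (simp add: hform_expand algebra_simps sum_subtractf)

lemma hform_rscale_left: "hform H (rscale x c) z = hform H x z * c"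
  by (simp add: hform_expand sum_distrib_right mult.assoc)

lemma hform_add_right: "hform H z (x + y) = hform H z x + hform H z y"
  by (simp add: hform_expand algebra_simps sum.distrib)

lemma hform_diff_right: "hform H z (x - y) = hform H z x - hform H z y"
  by (simp add: hform_expand algebra_simps sum_subtractf)

lemma hform_rscale_right: "hform H z (rscale x c) = qcnj c * hform H z x"
  by (simp add: hform_expand sum_distrib_left qcnj_mult mult.assoc)

lemmas hform_distribs = hform_add_left hform_diff_left hform_rscale_left
  hform_add_right hform_diff_right hform_rscale_right

lemma hform_zero_left [simp]: "hform H 0 z = 0"
  by (simp add: hform_expand)

lemma hform_zero_right [simp]: "hform H z 0 = 0"
  by (simp add: hform_expand)

lemma hform_sum_left: "hform H (sum f A) z = (\<Sum>i\<in>A. hform H (f i) z)"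
  by (induction A rule: infinite_finite_induct) (auto simp: hform_add_left)

lemma hform_sum_right: "hform H z (sum f A) = (\<Sum>i\<in>A. hform H z (f i))"
  by (induction A rule: infinite_finite_induct) (auto simp: hform_add_right)

lemma qcnj_hform:
  assumes "cstar H = H"
  shows "qcnj (hform H x y) = hform H y x"
proof -
  have H: "qcnj (H $ k $ j) = H $ j $ k" for k j
    using arg_cong[OF assms, of "\<lambda>M. M $ j $ k"] by simp
  have "qcnj (hform H x y) = (\<Sum>k\<in>UNIV. \<Sum>j\<in>UNIV. qcnj (x $ j) * H $ j $ k * y $ k)"
    by (simp add: hform_expand qcnj_sum qcnj_mult H mult.assoc)
  also have "\<dots> = (\<Sum>j\<in>UNIV. \<Sum>k\<in>UNIV. qcnj (x $ j) * H $ j $ k * y $ k)"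
    by (rule sum.swap)
  also have "\<dots> = hform H y x"
    by (simp add: hform_expand)
  finally show ?thesis .
qed

lemma hform_self_real:
  assumes "cstar H = H"
  shows "hform H x x = of_real (Re (hform H x x))"
  using qcnj_hform[OF assms, of x x] by (simp add: quat_eq_iff)

lemma hform_matrix_vector_mult:
  "hform H (A *v x) (B *v y) = hform (cstar B ** H ** A) x y"
  by (simp add: hform_def qinner_matrix_vector_mult_right matrix_vector_mul_assoc matrix_mul_assoc)

lemma hform_axis: "hform M (axis j 1) (axis i 1) = M $ i $ j"
proof -
  have "hform M (axis j 1) (axis i 1) = (\<Sum>k\<in>UNIV. qcnj (axis i 1 $ k) * M $ k $ j)"
    by (simp add: hform_def qinner_def matrix_vector_mult_def axis_def if_distrib[of "\<lambda>z. _ * z"]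
        cong: if_cong)
  also have "\<dots> = M $ i $ j"
    by (simp add: axis_def if_distrib[of qcnj] if_distrib[of "\<lambda>z. z * _"] cong: if_cong)
  finally show ?thesis .
qed

lemma matrix_eq_by_hform: "(\<And>x y. hform M x y = hform N x y) \<Longrightarrow> M = N"
  by (metis hform_axis vec_eq_iff)

definition lincomb :: "(nat \<Rightarrow> quat^'n) \<Rightarrow> nat \<Rightarrow> (nat \<Rightarrow> quat) \<Rightarrow> quat^'n" where
  "lincomb P m a = (\<Sum>i<m. rscale (P i) (a i))"

lemma hform_lincomb_left: "hform H (lincomb P m a) y = (\<Sum>i<m. hform H (P i) y * a i)"
  by (simp add: lincomb_def hform_sum_left hform_rscale_left)

lemma hform_lincomb_right: "hform H x (lincomb P m a) = (\<Sum>i<m. qcnj (a i) * hform H x (P i))"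
  by (simp add: lincomb_def hform_sum_right hform_rscale_right)

lemma matrix_vector_mult_lincomb: "M *v lincomb P m a = lincomb (\<lambda>i. M *v P i) m a"
  by (simp add: lincomb_def matrix_vector_mult_sum matrix_vector_mult_rscale)

lemma lincomb_delta: "k < m \<Longrightarrow> lincomb P m (\<lambda>i. if i = k then c else 0) = rscale (P k) c"
  by (simp add: lincomb_def if_distrib cong: if_cong)

lemma lincomb_add: "lincomb P m (\<lambda>i. a i + b i) = lincomb P m a + lincomb P m b"
  by (simp add: lincomb_def rscale_add_right sum.distrib)

lemma lincomb_diff: "lincomb P m (\<lambda>i. a i - b i) = lincomb P m a - lincomb P m b"
  by (simp add: lincomb_def rscale_diff_right sum_subtractf)

lemma lincomb_mult_right: "lincomb P m (\<lambda>i. a i * c) = rscale (lincomb P m a) c"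
  by (simp add: lincomb_def vec_eq_iff sum_distrib_right mult.assoc)

lemma lincomb_diff_family: "lincomb (\<lambda>i. P i - R i) m a = lincomb P m a - lincomb R m a"
  by (simp add: lincomb_def rscale_diff_left sum_subtractf)

lemma lincomb_fun_upd: "lincomb (P(m := z)) (Suc m) a = lincomb P m a + rscale z (a m)"
  by (simp add: lincomb_def)

definition right_subspace :: "(quat^'n) set \<Rightarrow> bool" where
  "right_subspace V \<longleftrightarrow> subspace V \<and> (\<forall>x\<in>V. \<forall>c. rscale x c \<in> V)"

definition nondegenerate_on :: "quat^'n^'n \<Rightarrow> (quat^'n) set \<Rightarrow> bool" where
  "nondegenerate_on H V \<longleftrightarrow> (\<forall>y\<in>V. (\<forall>x\<in>V. hform H x y = 0) \<longrightarrow> y = 0)"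

definition horth :: "quat^'n^'n \<Rightarrow> (quat^'n) set \<Rightarrow> (quat^'n) set" where
  "horth H V = {y. \<forall>x\<in>V. hform H x y = 0}"

lemma right_subspace_UNIV: "right_subspace UNIV"
  by (simp add: right_subspace_def)

lemma right_subspaceI:
  assumes "0 \<in> V" "\<And>x y. x \<in> V \<Longrightarrow> y \<in> V \<Longrightarrow> x + y \<in> V" "\<And>x c. x \<in> V \<Longrightarrow> rscale x c \<in> V"
  shows "right_subspace V"
  using assms by (auto simp: right_subspace_def subspace_def scaleR_eq_rscale)

lemma right_subspace_subspace: "right_subspace V \<Longrightarrow> subspace V"
  by (simp add: right_subspace_def)

lemma right_subspace_rscale: "right_subspace V \<Longrightarrow> x \<in> V \<Longrightarrow> rscale x c \<in> V"
  by (simp add: right_subspace_def)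

lemma right_subspace_add: "right_subspace V \<Longrightarrow> x \<in> V \<Longrightarrow> y \<in> V \<Longrightarrow> x + y \<in> V"
  by (simp add: right_subspace_def subspace_add)

lemma right_subspace_diff: "right_subspace V \<Longrightarrow> x \<in> V \<Longrightarrow> y \<in> V \<Longrightarrow> x - y \<in> V"
  by (simp add: right_subspace_def subspace_diff)

lemma right_subspace_lincomb:
  assumes "right_subspace V" "\<And>i. i < m \<Longrightarrow> P i \<in> V"
  shows "lincomb P m a \<in> V"
  unfolding lincomb_def using assms
  by (auto intro!: subspace_sum right_subspace_subspace right_subspace_rscale)

lemma nondegenerate_on_UNIV:
  assumes "invertible H"
  shows "nondegenerate_on H UNIV"
  unfolding nondegenerate_on_def
proof (intro ballI impI)
  fix y assume "\<forall>x\<in>UNIV. hform H x y = 0"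
  then have "hform H (matrix_inv H *v y) y = 0"
    by blast
  then show "y = 0"
    by (simp add: hform_def matrix_vector_mul_assoc matrix_inv_cancel[OF assms])
qed

lemma nondegenerate_on_kernel:
  assumes "cstar H = H" "nondegenerate_on H V" "x \<in> V" "H *v x = 0"
  shows "x = 0"
proof -
  have "hform H y x = 0" for y
    using qcnj_hform[OF assms(1), of x y] assms(4) by (simp add: hform_def qinner_def)
  then show ?thesis
    using assms(2,3) by (simp add: nondegenerate_on_def)
qed

lemma horth_eq_Re:
  assumes "right_subspace V"
  shows "horth H V = {y. \<forall>x\<in>V. Re (hform H x y) = 0}"
proof (intro set_eqI iffI)
  fix y assume y: "y \<in> {y. \<forall>x\<in>V. Re (hform H x y) = 0}"
  have "hform H x y = 0" if "x \<in> V" for x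
  proof (rule quat_eq_by_Re_mult)
    fix c
    show "Re (hform H x y * c) = Re (0 * c)"
      using y right_subspace_rscale[OF assms that, of c] by (simp add: hform_rscale_left[symmetric])
  qed
  then show "y \<in> horth H V"
    by (simp add: horth_def)
qed (simp add: horth_def)

text \<open>Over the reals, \<open>horth H V\<close> is the orthogonal complement of \<open>H V\<close>, whose dimension is that of
  \<open>V\<close>; so \<open>V\<close> and \<open>horth H V\<close> are complementary because they meet only in \<open>0\<close>.\<close>

lemma horth_decomposition:
  fixes H :: "quat^'n^'n"
  assumes H: "cstar H = H" and V: "right_subspace V" "nondegenerate_on H V"
  shows "\<exists>z\<in>V. w - z \<in> horth H V"
proof -
  let ?HV = "(\<lambda>x. H *v x) ` V"
  let ?W = "horth H V"
  have sV: "subspace V"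
    using V(1) by (rule right_subspace_subspace)
  have W: "{y \<in> UNIV. \<forall>a\<in>?HV. orthogonal a y} = ?W"
    unfolding horth_eq_Re[OF V(1)] by (auto simp: orthogonal_def inner_eq_Re_qinner hform_def)
  have "subspace ?HV"
    by (rule linear_subspace_image[OF matrix_vector_mul_linear sV])
  then have "dim ?W + dim ?HV = dim (UNIV :: (quat^'n) set)"
    unfolding W[symmetric] by (rule dim_subspace_orthogonal_to_vectors[OF _ subspace_UNIV]) simp
  moreover have "dim ?HV = dim V"
  proof (rule dim_image_eq[OF matrix_vector_mul_linear])
    show "inj_on (\<lambda>x. H *v x) (span V)"
      unfolding span_eq_iff[THEN iffD2, OF sV] inj_on_def
      using nondegenerate_on_kernel[OF H V(2)] sV
      by (metis matrix_vector_mult_diff_distrib right_subspace_diff[OF V(1)] eq_iff_diff_eq_0)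
  qed
  moreover have sW: "subspace ?W"
    unfolding subspace_def horth_def by (auto simp: hform_add_right scaleR_eq_rscale hform_rscale_right)
  moreover have "V \<inter> ?W = {0}"
    using V(2) sV by (auto simp: nondegenerate_on_def horth_def subspace_0)
  moreover have "dim {x + y |x y. x \<in> V \<and> y \<in> ?W} + dim (V \<inter> ?W) = dim V + dim ?W"
    by (rule dim_sums_Int[OF sV sW])
  ultimately have "dim {x + y |x y. x \<in> V \<and> y \<in> ?W} = DIM(quat^'n)"
    by (simp add: dim_UNIV)
  then have "span {x + y |x y. x \<in> V \<and> y \<in> ?W} = UNIV"
    by (rule dim_eq_full[THEN iffD1])
  then have "w \<in> {x + y |x y. x \<in> V \<and> y \<in> ?W}"
    using span_eq_iff[THEN iffD2, OF subspace_sums[OF sV sW]] by simp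
  then show ?thesis
    by force
qed

lemma subspace_functional_eq_inner:
  fixes f :: "'a::euclidean_space \<Rightarrow> real"
  assumes S: "subspace S"
    and add: "\<And>x y. x \<in> S \<Longrightarrow> y \<in> S \<Longrightarrow> f (x + y) = f x + f y"
    and scale: "\<And>r x. x \<in> S \<Longrightarrow> f (r *\<^sub>R x) = r * f x"
  shows "\<exists>u. \<forall>x\<in>S. f x = inner x u"
proof -
  obtain B where B: "B \<subseteq> S" "independent B" "S \<subseteq> span B"
    using basis_exists[of S] by metis
  obtain g where g: "linear g" "\<forall>x\<in>B. g x = f x"
    using linear_independent_extend[OF B(2), of f] by blast
  have "x \<in> S \<and> g x = f x" if "x \<in> span B" for x
    using that
  proof (induction rule: span_induct_alt)
    case base
    show ?case
      using scale[of 0 0] S by (simp add: subspace_0 linear_0[OF g(1)])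
  next
    case (step c x y)
    then have "x \<in> S"
      using B(1) by blast
    then show ?case
      using step g S
      by (simp add: subspace_add subspace_scale add scale linear_add[OF g(1)] linear_scale[OF g(1)])
  qed
  moreover have "g x = inner x (adjoint g 1)" for x
    using adjoint_works[OF g(1), of x 1] by simp
  ultimately show ?thesis
    using B(3) by (metis subsetD)
qed

lemma scaleR_lincomb: "r *\<^sub>R lincomb Q m a = lincomb Q m (\<lambda>i. a i * of_real r)"
  by (simp add: lincomb_mult_right scaleR_eq_rscale)

lemma subspace_range_lincomb: "subspace (range (lincomb Q m))"
  unfolding subspace_def
proof (intro conjI ballI allI)
  have "lincomb Q m (\<lambda>_. 0) = 0"
    by (simp add: lincomb_def)
  then show "0 \<in> range (lincomb Q m)"
    by (metis rangeI)
next
  fix x y assume "x \<in> range (lincomb Q m)" "y \<in> range (lincomb Q m)"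
  then obtain a b where "x = lincomb Q m a" "y = lincomb Q m b"
    by blast
  then show "x + y \<in> range (lincomb Q m)"
    by (simp add: lincomb_add[symmetric])
qed (auto simp: scaleR_lincomb)

lemma lincomb_functional_exists:
  assumes consistent: "\<And>a. lincomb Q m a = 0 \<Longrightarrow> (\<Sum>i<m. \<alpha> i * a i) = 0"
  shows "\<exists>f. \<forall>a. f (lincomb Q m a) = (\<Sum>i<m. \<alpha> i * a i)"
proof -
  define f where "f x = (\<Sum>i<m. \<alpha> i * (SOME a. x = lincomb Q m a) i)" for x
  have "f (lincomb Q m a) = (\<Sum>i<m. \<alpha> i * a i)" for a
  proof -
    define b where "b = (SOME b. lincomb Q m a = lincomb Q m b)"
    have "lincomb Q m a = lincomb Q m b"
      unfolding b_def by (rule someI[of _ a]) simp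
    then have "lincomb Q m (\<lambda>i. a i - b i) = 0"
      by (simp add: lincomb_diff)
    then have "(\<Sum>i<m. \<alpha> i * (a i - b i)) = 0"
      by (rule consistent)
    then show ?thesis
      by (simp add: f_def b_def right_diff_distrib sum_subtractf)
  qed
  then show ?thesis
    by blast
qed

text \<open>The solution is obtained by representing the real part of the consistent functional on the span
  of \<open>Q\<close> by the real inner product; the real parts of \<open>q c\<close> for all \<open>c\<close> determine a quaternion \<open>q\<close>.\<close>

lemma qinner_system_solvable:
  fixes Q :: "nat \<Rightarrow> quat^'n"
  assumes consistent: "\<And>a. lincomb Q m a = 0 \<Longrightarrow> (\<Sum>i<m. \<alpha> i * a i) = 0"
  shows "\<exists>u. \<forall>i<m. qinner (Q i) u = \<alpha> i"
proof -
  obtain f where f: "\<And>a. f (lincomb Q m a) = (\<Sum>i<m. \<alpha> i * a i)"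
    using lincomb_functional_exists[OF consistent] by blast
  have "\<exists>u. \<forall>x\<in>range (lincomb Q m). Re (f x) = inner x u"
  proof (rule subspace_functional_eq_inner[OF subspace_range_lincomb])
    fix x y assume "x \<in> range (lincomb Q m)" "y \<in> range (lincomb Q m)"
    then show "Re (f (x + y)) = Re (f x) + Re (f y)"
      by (auto simp: f lincomb_add[symmetric] distrib_left sum.distrib)
  next
    fix r x assume "x \<in> range (lincomb Q m)"
    then obtain a where x: "x = lincomb Q m a"
      by blast
    have "(\<Sum>i<m. \<alpha> i * (a i * of_real r)) = (\<Sum>i<m. \<alpha> i * a i) * of_real r"
      by (simp add: sum_distrib_right mult.assoc)
    then show "Re (f (r *\<^sub>R x)) = r * Re (f x)"
      by (simp add: x scaleR_lincomb f)
  qed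
  then obtain u where u: "\<And>a. Re (f (lincomb Q m a)) = inner (lincomb Q m a) u"
    by blast
  have "qinner (Q i) u = \<alpha> i" if i: "i < m" for i
  proof (rule quat_eq_by_Re_mult)
    fix c
    have Qc: "rscale (Q i) c = lincomb Q m (\<lambda>j. if j = i then c else 0)"
      by (simp add: lincomb_delta i)
    have "Re (qinner (Q i) u * c) = Re (f (rscale (Q i) c))"
      unfolding Qc u by (simp add: Qc[symmetric] inner_eq_Re_qinner qinner_rscale_left)
    also have "\<dots> = Re (\<alpha> i * c)"
      unfolding Qc f using i by (simp add: if_distrib cong: if_cong)
    finally show "Re (qinner (Q i) u * c) = Re (\<alpha> i * c)" .
  qed
  then show ?thesis
    by blast
qed

lemma hform_system_solvable_in:
  assumes H: "cstar H = H" and V: "right_subspace V" "nondegenerate_on H V"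
    and Q: "\<And>i. i < m \<Longrightarrow> Q i \<in> V"
    and consistent: "\<And>a. lincomb Q m a = 0 \<Longrightarrow> (\<Sum>i<m. \<alpha> i * a i) = 0"
  shows "\<exists>z\<in>V. \<forall>i<m. hform H (Q i) z = \<alpha> i"
proof -
  have "(\<Sum>i<m. \<alpha> i * a i) = 0" if "lincomb (\<lambda>i. H *v Q i) m a = 0" for a
  proof (rule consistent, rule nondegenerate_on_kernel[OF H V(2)])
    show "lincomb Q m a \<in> V"
      using V(1) Q by (rule right_subspace_lincomb)
    show "H *v lincomb Q m a = 0"
      using that by (simp add: matrix_vector_mult_lincomb)
  qed
  then obtain u where u: "\<forall>i<m. hform H (Q i) u = \<alpha> i"
    using qinner_system_solvable[of "\<lambda>i. H *v Q i" m \<alpha>] by (auto simp: hform_def)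
  obtain z where z: "z \<in> V" "u - z \<in> horth H V"
    using horth_decomposition[OF H V] by blast
  have "hform H (Q i) z = \<alpha> i" if "i < m" for i
    using z(2) Q[OF that] u that by (auto simp: horth_def hform_diff_right)
  then show ?thesis
    using z(1) by blast
qed

section \<open>Elementary isometries\<close>

definition rank_one :: "quat^'n^'n \<Rightarrow> quat^'n \<Rightarrow> quat \<Rightarrow> quat^'n^'n" where
  "rank_one H v s = (\<chi> i j. v $ i * s * (\<Sum>k\<in>UNIV. qcnj (v $ k) * H $ k $ j))"

lemma rank_one_mult_vector: "rank_one H v s *v x = rscale v (s * hform H x v)"
proof -
  have "(rank_one H v s *v x) $ i = v $ i * (s * (\<Sum>j\<in>UNIV. \<Sum>k\<in>UNIV. qcnj (v $ k) * H $ k $ j * x $ j))"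
    for i
    by (simp add: rank_one_def matrix_vector_mult_def sum_distrib_left sum_distrib_right mult.assoc)
  moreover have "(\<Sum>j\<in>UNIV. \<Sum>k\<in>UNIV. qcnj (v $ k) * H $ k $ j * x $ j) = hform H x v"
    unfolding hform_expand by (rule sum.swap)
  ultimately show ?thesis
    by (simp add: vec_eq_iff)
qed

lemma rank_one_update_mult_vector: "(mat 1 + rank_one H v s) *v x = x + rscale v (s * hform H x v)"
  by (simp add: matrix_vector_mult_add_rdistrib rank_one_mult_vector)

definition isometry_on :: "quat^'n^'n \<Rightarrow> (quat^'n) set \<Rightarrow> quat^'n^'n \<Rightarrow> bool" where
  "isometry_on H V U \<longleftrightarrow>
     (\<forall>x\<in>V. U *v x \<in> V) \<and> (\<forall>x\<in>V. \<forall>y\<in>V. hform H (U *v x) (U *v y) = hform H x y)"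

lemma isometry_on_mult:
  assumes "isometry_on H V A" "isometry_on H V B"
  shows "isometry_on H V (A ** B)"
  using assms by (simp add: isometry_on_def matrix_vector_mul_assoc[symmetric])

lemma isometry_on_uminus:
  assumes "right_subspace V" "isometry_on H V A"
  shows "isometry_on H V (- A)"
proof -
  have "- A *v x = rscale (A *v x) (- 1)" for x
    by (simp add: vec_eq_iff matrix_vector_mult_def sum_negf)
  then show ?thesis
    using assms by (simp add: isometry_on_def right_subspace_rscale hform_rscale_left hform_rscale_right)
qed

lemma isometry_on_kernel:
  assumes "nondegenerate_on H V" "isometry_on H V U" "x \<in> V" "U *v x = 0"
  shows "x = 0"
proof -
  have "hform H y x = 0" if "y \<in> V" for y
    using assms(2-4) that by (metis isometry_on_def hform_zero_right)
  then show ?thesis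
    using assms(1,3) by (simp add: nondegenerate_on_def)
qed

lemma isometry_on_rank_one_update:
  assumes H: "cstar H = H" and V: "right_subspace V" "v \<in> V"
    and s: "s + qcnj s + qcnj s * hform H v v * s = 0"
  shows "isometry_on H V (mat 1 + rank_one H v s)"
proof -
  have "hform H ((mat 1 + rank_one H v s) *v x) ((mat 1 + rank_one H v s) *v y) = hform H x y" for x y
  proof -
    define a b c where "a = hform H x v" and "b = hform H y v" and "c = hform H v v"
    have vy: "hform H v y = qcnj b"
      using qcnj_hform[OF H, of y v] by (simp add: b_def)
    have "hform H ((mat 1 + rank_one H v s) *v x) ((mat 1 + rank_one H v s) *v y) =
        hform H x y + qcnj (s * b) * a + qcnj b * (s * a) + qcnj (s * b) * c * (s * a)"
      unfolding rank_one_update_mult_vector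
      by (simp add: hform_distribs vy a_def[symmetric] b_def[symmetric] c_def[symmetric] mult.assoc
          algebra_simps)
    also have "\<dots> = hform H x y + qcnj b * (s + qcnj s + qcnj s * c * s) * a"
      by (simp add: qcnj_mult algebra_simps)
    finally show ?thesis
      using s by (simp add: c_def)
  qed
  then show ?thesis
    using V by (simp add: isometry_on_def rank_one_update_mult_vector right_subspace_add right_subspace_rscale)
qed

lemma reflection_exists:
  assumes H: "cstar H = H" and V: "right_subspace V" "w \<in> V"
    and w: "hform H w w = of_real r" "r \<noteq> 0" and p: "hform H p w = of_real (r / 2)"
  shows "\<exists>M. isometry_on H V M \<and> M *v p = p - w"
proof (intro exI conjI)
  let ?s = "of_real (- 2 / r) :: quat"
  have "?s + qcnj ?s + qcnj ?s * of_real r * ?s = of_real (- 2 / r + - 2 / r + (- 2 / r) * r * (- 2 / r))"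
    by (simp only: qcnj_of_real of_real_add of_real_mult)
  also have "\<dots> = 0"
    using w(2) by (simp add: field_simps)
  finally show "isometry_on H V (mat 1 + rank_one H w ?s)"
    by (intro isometry_on_rank_one_update[OF H V]) (simp add: w)
  show "(mat 1 + rank_one H w ?s) *v p = p - w"
    using w(2) by (simp add: rank_one_update_mult_vector p of_real_mult[symmetric] rscale_minus_right)
qed

lemma rotation_exists:
  assumes H: "cstar H = H" and V: "right_subspace V" "v \<in> V"
    and v: "hform H v v = of_real r" "r \<noteq> 0" and \<nu>: "norm \<nu> = 1"
  shows "\<exists>M. isometry_on H V M \<and> M *v rscale v \<mu> = rscale v (\<nu> * \<mu>)"
proof (intro exI conjI)
  define s where "s = (1 / r) *\<^sub>R (\<nu> - 1)"
  have "qcnj \<nu> * \<nu> = 1"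
    using \<nu> by (simp add: qcnj_mult_self)
  then have "s + qcnj s + qcnj s * of_real r * s = 0"
    using v(2) by (simp add: s_def of_real_def algebra_simps power2_eq_square)
  then show "isometry_on H V (mat 1 + rank_one H v s)"
    by (intro isometry_on_rank_one_update[OF H V]) (simp add: v)
  have "\<mu> + s * (of_real r * \<mu>) = \<nu> * \<mu>"
    using v(2) by (simp add: s_def of_real_def algebra_simps)
  then show "(mat 1 + rank_one H v s) *v rscale v \<mu> = rscale v (\<nu> * \<mu>)"
    unfolding rank_one_update_mult_vector
    by (simp add: hform_rscale_left v rscale_add_right[symmetric])
qed

text \<open>Reflect in \<open>p - q\<close>, or, if that vector is isotropic, take minus the reflection in \<open>p + q\<close>.\<close>

lemma isometry_on_move_real:
  assumes H: "cstar H = H" and V: "right_subspace V" "p \<in> V" "q \<in> V"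
    and pp: "hform H p p = of_real c" and qq: "hform H q q = of_real c" and c: "c \<noteq> 0"
    and pq: "hform H p q = of_real d"
  shows "\<exists>M. isometry_on H V M \<and> M *v p = q"
proof -
  have qp: "hform H q p = of_real d"
    using qcnj_hform[OF H, of p q] pq by simp
  show ?thesis
  proof (cases "c = d")
    case False
    have "hform H (p - q) (p - q) = of_real (c - d - (d - c))"
      by (simp only: hform_distribs pp qq pq qp of_real_diff)
    moreover have "hform H p (p - q) = of_real ((c - d - (d - c)) / 2)"
      unfolding hform_diff_right pp pq by (simp add: of_real_diff[symmetric] del: of_real_diff)
    ultimately obtain M where "isometry_on H V M" "M *v p = p - (p - q)"
      using reflection_exists[OF H V(1) right_subspace_diff[OF V]] False by fastforce
    then show ?thesis
      by auto
  next
    case True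
    have "hform H (p + q) (p + q) = of_real (c + d + (d + c))"
      by (simp only: hform_distribs pp qq pq qp of_real_add)
    moreover have "hform H p (p + q) = of_real ((c + d + (d + c)) / 2)"
      unfolding hform_add_right pp pq by (simp add: of_real_add[symmetric] del: of_real_add)
    ultimately obtain M where "isometry_on H V M" "M *v p = p - (p + q)"
      using reflection_exists[OF H V(1) right_subspace_add[OF V]] True c by fastforce
    then have "isometry_on H V (- M)" "- M *v p = q"
      using isometry_on_uminus[OF V(1)] by (auto simp: matrix_vector_mult_def vec_eq_iff sum_negf)
    then show ?thesis
      by blast
  qed
qed

lemma norm_qcnj [simp]: "norm (qcnj x) = norm x"
  by (simp add: norm_quat_def inner_quat_def)

text \<open>Witt's theorem for a single vector: first rotate \<open>q\<close> by a unit scalar so that \<open>[p, q]\<close> becomes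
  real, then reflect.\<close>

lemma isometry_on_move:
  assumes H: "cstar H = H" and V: "right_subspace V" "p \<in> V" "q \<in> V"
    and eq: "hform H p p = hform H q q" and nz: "hform H p p \<noteq> 0"
  shows "\<exists>M. isometry_on H V M \<and> M *v p = q"
proof -
  define c where "c = Re (hform H p p)"
  have pp: "hform H p p = of_real c" and qq: "hform H q q = of_real c"
    using hform_self_real[OF H, of p] eq by (simp_all add: c_def)
  obtain \<mu> where \<mu>: "norm \<mu> = 1" "qcnj \<mu> * hform H p q = of_real (norm (hform H p q))"
    using exists_unit_rotating_to_real by blast
  have \<mu>\<mu>: "qcnj \<mu> * \<mu> = 1"
    using \<mu>(1) by (simp add: qcnj_mult_self)
  have "hform H (rscale q \<mu>) (rscale q \<mu>) = of_real c"
    using \<mu>\<mu> by (simp add: hform_rscale_left hform_rscale_right qq of_real_def)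
  moreover have "hform H p (rscale q \<mu>) = of_real (norm (hform H p q))"
    using \<mu>(2) by (simp add: hform_rscale_right)
  ultimately obtain M1 where M1: "isometry_on H V M1" "M1 *v p = rscale q \<mu>"
    using isometry_on_move_real[OF H V(1,2) right_subspace_rscale[OF V(1,3)] pp] nz pp by auto
  have "c \<noteq> 0"
    using nz pp by auto
  then obtain M2 where M2: "isometry_on H V M2" "M2 *v rscale q \<mu> = rscale q (qcnj \<mu> * \<mu>)"
    using rotation_exists[OF H V(1,3) qq, of "qcnj \<mu>" \<mu>] \<mu>(1) by auto
  have "(M2 ** M1) *v p = q"
    using M1(2) M2(2) \<mu>\<mu> by (simp add: matrix_vector_mul_assoc[symmetric])
  then show ?thesis
    using isometry_on_mult[OF M2(1) M1(1)] by blast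
qed

section \<open>Witt's extension theorem\<close>

definition hproj :: "quat^'n^'n \<Rightarrow> quat^'n \<Rightarrow> quat^'n \<Rightarrow> quat^'n" where
  "hproj H p x = rscale p (inverse (hform H p p) * hform H x p)"

lemma rank_one_hproj: "rank_one H p (inverse (hform H p p)) *v x = hproj H p x"
  by (simp add: rank_one_mult_vector hproj_def)

lemma hform_hproj_left:
  assumes "hform H p p \<noteq> 0"
  shows "hform H (hproj H p x) p = hform H x p"
  using assms by (simp add: hproj_def hform_rscale_left mult.assoc[symmetric])

lemma hproj_lincomb:
  "hproj H p (lincomb P m a) = rscale p (inverse (hform H p p) * (\<Sum>i<m. hform H (P i) p * a i))"
  by (simp add: hproj_def hform_lincomb_left)

lemma lincomb_hproj: "lincomb (\<lambda>i. hproj H p (R i)) m a = hproj H p (lincomb R m a)"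
  by (simp add: lincomb_def hproj_def hform_sum_left hform_rscale_left rscale_sum_right
      sum_distrib_left mult.assoc)

lemma orthogonal_slice:
  assumes H: "cstar H = H" and V: "right_subspace V" "nondegenerate_on H V"
    and p: "p \<in> V" "hform H p p \<noteq> 0"
  defines "W \<equiv> {x \<in> V. hform H x p = 0}"
  shows "\<And>x. x \<in> V \<Longrightarrow> x - hproj H p x \<in> W"
    and "right_subspace W" and "nondegenerate_on H W" and "dim W < dim V"
proof -
  show proj: "x - hproj H p x \<in> W" if "x \<in> V" for x
    using that p V(1) hform_hproj_left[OF p(2)]
    by (simp add: W_def hform_diff_left hproj_def right_subspace_diff right_subspace_rscale)
  show W: "right_subspace W"
    unfolding W_def using V(1)
    by (intro right_subspaceI) (auto simp: right_subspace_def subspace_0 subspace_add hform_distribs)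
  show "nondegenerate_on H W"
    unfolding nondegenerate_on_def
  proof (intro ballI impI)
    fix y assume yW: "y \<in> W" and y: "\<forall>x\<in>W. hform H x y = 0"
    have "hform H x y = 0" if "x \<in> V" for x
    proof -
      have "hform H (x - hproj H p x) y = 0"
        using y proj[OF that] by blast
      moreover have "hform H p y = 0"
        using yW qcnj_hform[OF H, of y p] by (simp add: W_def)
      ultimately show ?thesis
        by (simp add: hproj_def hform_diff_left hform_rscale_left)
    qed
    then show "y = 0"
      using V(2) yW by (simp add: W_def nondegenerate_on_def)
  qed
  have "span W = W" "span V = V"
    using W V(1) by (simp_all add: right_subspace_def span_eq_iff)
  moreover have "W \<subset> V"
    using p by (auto simp: W_def)
  ultimately show "dim W < dim V"
    by (metis dim_psubset)
qed

definition slice_extension :: "quat^'n^'n \<Rightarrow> quat^'n \<Rightarrow> quat^'n^'n \<Rightarrow> quat^'n^'n" where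
  "slice_extension H p U =
     rank_one H p (inverse (hform H p p)) + U ** (mat 1 - rank_one H p (inverse (hform H p p)))"

lemma slice_extension_mult_vector:
  "slice_extension H p U *v x = hproj H p x + U *v (x - hproj H p x)"
  by (simp add: slice_extension_def matrix_vector_mult_add_rdistrib matrix_vector_mul_assoc[symmetric]
      matrix_vector_mult_diff_rdistrib rank_one_hproj)

lemma isometry_on_slice_extension:
  assumes H: "cstar H = H" and V: "right_subspace V" "nondegenerate_on H V"
    and p: "p \<in> V" "hform H p p \<noteq> 0"
    and U: "isometry_on H {x \<in> V. hform H x p = 0} U"
  shows "isometry_on H V (slice_extension H p U)" (is "isometry_on H V ?U'")
proof -
  let ?W = "{x \<in> V. hform H x p = 0}"
  note slice = orthogonal_slice[OF H V p]
  have UW: "U *v (x - hproj H p x) \<in> ?W" "x - hproj H p x \<in> ?W" if "x \<in> V" for x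
    using U slice(1)[OF that] by (auto simp: isometry_on_def)
  have split: "hform H (hproj H p x + w) (hproj H p y + w') = hform H (hproj H p x) (hproj H p y) + hform H w w'"
    if "w \<in> ?W" "w' \<in> ?W" for x y w w'
  proof -
    have "hform H p w' = 0"
      using that qcnj_hform[OF H, of w' p] by simp
    then show ?thesis
      using that by (simp add: hproj_def hform_distribs)
  qed
  have "hform H (?U' *v x) (?U' *v y) = hform H x y" if "x \<in> V" "y \<in> V" for x y
  proof -
    have "hform H (?U' *v x) (?U' *v y) =
        hform H (hproj H p x) (hproj H p y) + hform H (x - hproj H p x) (y - hproj H p y)"
      using U UW[OF that(1)] UW[OF that(2)] by (simp add: slice_extension_mult_vector split isometry_on_def)
    also have "\<dots> = hform H (hproj H p x + (x - hproj H p x)) (hproj H p y + (y - hproj H p y))"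
      by (rule split[symmetric]) (use UW[OF that(1)] UW[OF that(2)] in auto)
    finally show ?thesis
      by simp
  qed
  moreover have "?U' *v x \<in> V" if "x \<in> V" for x
    using UW[OF that] p V(1)
    by (simp add: slice_extension_mult_vector hproj_def right_subspace_add right_subspace_rscale)
  ultimately show ?thesis
    by (simp add: isometry_on_def)
qed

text \<open>Two families are congruent in \<open>V\<close> when \<open>P i \<mapsto> Q i\<close> extends to a well-defined linear isometry
  from the span of \<open>P\<close> onto the span of \<open>Q\<close>.\<close>

definition congruent_families ::
    "quat^'n^'n \<Rightarrow> (quat^'n) set \<Rightarrow> nat \<Rightarrow> (nat \<Rightarrow> quat^'n) \<Rightarrow> (nat \<Rightarrow> quat^'n) \<Rightarrow> bool" where
  "congruent_families H V m P Q \<longleftrightarrow>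
     (\<forall>i<m. P i \<in> V \<and> Q i \<in> V) \<and>
     (\<forall>i<m. \<forall>j<m. hform H (P i) (P j) = hform H (Q i) (Q j)) \<and>
     (\<forall>a. lincomb P m a = 0 \<longleftrightarrow> lincomb Q m a = 0)"

lemma congruent_families_hform_lincomb_right:
  assumes "congruent_families H V m P Q" "i < m"
  shows "hform H (P i) (lincomb P m b) = hform H (Q i) (lincomb Q m b)"
  using assms by (simp add: hform_lincomb_right congruent_families_def)

lemma congruent_families_hform_lincomb:
  assumes "congruent_families H V m P Q"
  shows "hform H (lincomb P m a) (lincomb P m b) = hform H (lincomb Q m a) (lincomb Q m b)"
  using congruent_families_hform_lincomb_right[OF assms] by (simp add: hform_lincomb_left)

lemma congruent_families_isometry_on:
  assumes V: "nondegenerate_on H V" "right_subspace V" and U: "isometry_on H V U"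
    and PQ: "congruent_families H V m P Q"
  shows "congruent_families H V m (\<lambda>i. U *v P i) Q"
proof -
  have "lincomb (\<lambda>i. U *v P i) m a = 0 \<longleftrightarrow> lincomb P m a = 0" for a
  proof -
    have "lincomb P m a \<in> V"
      using PQ by (intro right_subspace_lincomb[OF V(2)]) (simp add: congruent_families_def)
    then show ?thesis
      using isometry_on_kernel[OF V(1) U] by (auto simp: matrix_vector_mult_lincomb[symmetric])
  qed
  then show ?thesis
    using U PQ by (simp add: congruent_families_def isometry_on_def)
qed

text \<open>The projected families stay congruent because \<open>[P i, p] = [Q i, p]\<close>.\<close>

lemma congruent_families_slice:
  assumes H: "cstar H = H" and V: "right_subspace V" "nondegenerate_on H V"
    and PQ: "congruent_families H V m P Q"
    and p: "lincomb P m v = p" "lincomb Q m v = p" "hform H p p \<noteq> 0"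
  shows "congruent_families H {x \<in> V. hform H x p = 0} m
      (\<lambda>i. P i - hproj H p (P i)) (\<lambda>i. Q i - hproj H p (Q i))"
proof -
  have PQV: "P i \<in> V" "Q i \<in> V" if "i < m" for i
    using PQ that by (auto simp: congruent_families_def)
  have pV: "p \<in> V"
    unfolding p(1)[symmetric] by (rule right_subspace_lincomb[OF V(1) PQV(1)])
  have Pp: "hform H (P i) p = hform H (Q i) p" if "i < m" for i
    using congruent_families_hform_lincomb_right[OF PQ that, of v] p by simp
  have pP: "hform H p (P i) = hform H p (Q i)" if "i < m" for i
    using Pp[OF that] qcnj_hform[OF H, of "P i" p] qcnj_hform[OF H, of "Q i" p] by metis
  have "lincomb (\<lambda>i. P i - hproj H p (P i)) m a = 0 \<longleftrightarrow> lincomb (\<lambda>i. Q i - hproj H p (Q i)) m a = 0"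
    for a
  proof -
    define s where "s = inverse (hform H p p) * (\<Sum>i<m. hform H (Q i) p * a i)"
    have "(\<Sum>i<m. hform H (P i) p * a i) = (\<Sum>i<m. hform H (Q i) p * a i)"
      by (rule sum.cong) (simp_all add: Pp)
    then have "hproj H p (lincomb P m a) = rscale p s" "hproj H p (lincomb Q m a) = rscale p s"
      by (simp_all add: hproj_lincomb s_def)
    then have "lincomb (\<lambda>i. P i - hproj H p (P i)) m a = lincomb P m (\<lambda>i. a i - v i * s)"
      "lincomb (\<lambda>i. Q i - hproj H p (Q i)) m a = lincomb Q m (\<lambda>i. a i - v i * s)"
      by (simp_all add: lincomb_diff_family lincomb_hproj lincomb_diff lincomb_mult_right p)
    then show ?thesis
      using PQ by (simp add: congruent_families_def)
  qed
  moreover have "hform H (P i - hproj H p (P i)) (P j - hproj H p (P j)) =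
      hform H (Q i - hproj H p (Q i)) (Q j - hproj H p (Q j))" if "i < m" "j < m" for i j
    using PQ that by (simp add: hproj_def hform_distribs Pp pP congruent_families_def)
  ultimately show ?thesis
    using orthogonal_slice(1)[OF H V pV p(3)] PQV by (simp add: congruent_families_def)
qed

lemma witt_step_common_vector:
  fixes H :: "quat^'n^'n"
  assumes H: "cstar H = H" and V: "right_subspace V" "nondegenerate_on H V"
    and PQ: "congruent_families H V m P Q"
    and p: "lincomb P m v = p" "lincomb Q m v = p" "hform H p p \<noteq> 0"
    and IH: "\<And>W m' P' Q'. right_subspace W \<Longrightarrow> nondegenerate_on H W \<Longrightarrow> dim W < dim V \<Longrightarrow>
      congruent_families H W m' P' Q' \<Longrightarrow> \<exists>U. isometry_on H W U \<and> (\<forall>i<m'. U *v P' i = Q' i)"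
  shows "\<exists>U. isometry_on H V U \<and> (\<forall>i<m. U *v P i = Q i)"
proof -
  have pV: "p \<in> V"
    using PQ unfolding p(1)[symmetric]
    by (auto intro!: right_subspace_lincomb[OF V(1)] simp: congruent_families_def)
  note slice = orthogonal_slice[OF H V pV p(3)]
  obtain U where U: "isometry_on H {x \<in> V. hform H x p = 0} U"
    "\<forall>i<m. U *v (P i - hproj H p (P i)) = Q i - hproj H p (Q i)"
    using IH[OF slice(2-4) congruent_families_slice[OF H V PQ p]] by blast
  have "slice_extension H p U *v P i = Q i" if "i < m" for i
  proof -
    have "hform H (P i) p = hform H (Q i) p"
      using congruent_families_hform_lincomb_right[OF PQ that, of v] by (simp add: p)
    then have "hproj H p (P i) = hproj H p (Q i)"
      by (simp add: hproj_def)
    moreover have "slice_extension H p U *v P i = hproj H p (P i) + (Q i - hproj H p (Q i))"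
      using U(2) that by (simp add: slice_extension_mult_vector)
    ultimately show ?thesis
      by simp
  qed
  then show ?thesis
    using isometry_on_slice_extension[OF H V pV p(3) U(1)] by blast
qed

lemma witt_step_anisotropic:
  fixes H :: "quat^'n^'n"
  assumes H: "cstar H = H" and V: "right_subspace V" "nondegenerate_on H V"
    and PQ: "congruent_families H V m P Q"
    and an: "hform H (lincomb P m v) (lincomb P m v) \<noteq> 0"
    and IH: "\<And>W m' P' Q'. right_subspace W \<Longrightarrow> nondegenerate_on H W \<Longrightarrow> dim W < dim V \<Longrightarrow>
      congruent_families H W m' P' Q' \<Longrightarrow> \<exists>U. isometry_on H W U \<and> (\<forall>i<m'. U *v P' i = Q' i)"
  shows "\<exists>U. isometry_on H V U \<and> (\<forall>i<m. U *v P i = Q i)"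
proof -
  define p where "p = lincomb Q m v"
  have "lincomb P m v \<in> V" "p \<in> V"
    using PQ unfolding p_def by (auto intro!: right_subspace_lincomb[OF V(1)] simp: congruent_families_def)
  moreover have pp: "hform H p p = hform H (lincomb P m v) (lincomb P m v)"
    using congruent_families_hform_lincomb[OF PQ] by (simp add: p_def)
  ultimately obtain \<phi> where \<phi>: "isometry_on H V \<phi>" "\<phi> *v lincomb P m v = p"
    using isometry_on_move[OF H V(1)] an by metis
  have "congruent_families H V m (\<lambda>i. \<phi> *v P i) Q"
    by (rule congruent_families_isometry_on[OF V(2,1) \<phi>(1) PQ])
  moreover have "lincomb (\<lambda>i. \<phi> *v P i) m v = p"
    using \<phi>(2) by (simp add: matrix_vector_mult_lincomb[symmetric])
  moreover have "hform H p p \<noteq> 0"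
    using an pp by simp
  ultimately obtain U where U: "isometry_on H V U" "\<forall>i<m. U *v (\<phi> *v P i) = Q i"
    using witt_step_common_vector[OF H V _ _ p_def[symmetric] _ IH] by blast
  then have "(U ** \<phi>) *v P i = Q i" if "i < m" for i
    using that by (simp add: matrix_vector_mul_assoc[symmetric])
  then show ?thesis
    using isometry_on_mult[OF U(1) \<phi>(1)] by blast
qed

lemma qcnj_mult_self_double_eq_0_iff: "qcnj g * g + qcnj g * g = 0 \<longleftrightarrow> g = 0"
proof -
  have "qcnj g * g + qcnj g * g = of_real ((norm g)\<^sup>2 + (norm g)\<^sup>2)"
    by (simp only: qcnj_mult_self of_real_add)
  then show ?thesis
    by simp
qed

lemma hform_eq_0_if_totally_isotropic:
  assumes H: "cstar H = H" and iso: "\<And>v. hform H (lincomb P m v) (lincomb P m v) = 0"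
    and ij: "i < m" "j < m"
  shows "hform H (P i) (P j) = 0"
proof -
  define g where "g = hform H (P i) (P j)"
  have ji: "hform H (P j) (P i) = qcnj g"
    using qcnj_hform[OF H, of "P i" "P j"] by (simp add: g_def)
  have kk: "hform H (P k) (P k) = 0" if "k < m" for k
    using iso[of "\<lambda>l. if l = k then 1 else 0"] that by (simp add: lincomb_delta)
  have "lincomb P m (\<lambda>l. (if l = i then 1 else 0) + (if l = j then g else 0)) = P i + rscale (P j) g"
    using ij by (simp add: lincomb_add lincomb_delta)
  then have "0 = hform H (P i + rscale (P j) g) (P i + rscale (P j) g)"
    by (metis iso)
  also have "\<dots> = qcnj g * g + qcnj g * g"
    using kk ij by (simp add: hform_distribs ji g_def[symmetric])
  finally have "qcnj g * g + qcnj g * g = 0"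
    by simp
  then show ?thesis
    by (simp add: g_def qcnj_mult_self_double_eq_0_iff)
qed

lemma exists_isotropic_shift:
  assumes H: "cstar H = H" and q: "hform H q q = 0" "hform H q y \<noteq> 0"
  shows "\<exists>t. hform H (y + rscale q t) (y + rscale q t) = 0"
proof
  define g where "g = hform H q y"
  define d where "d = Re (hform H y y)"
  define t where "t = - (inverse g * of_real (d / 2))"
  have gt: "g * t = - of_real (d / 2)"
    using q(2) by (simp add: t_def g_def mult.assoc[symmetric])
  then have tg: "qcnj t * qcnj g = - of_real (d / 2)"
    by (metis qcnj_mult qcnj_minus qcnj_of_real)
  have "hform H (y + rscale q t) (y + rscale q t) = hform H y y + qcnj t * qcnj g + g * t"
    using q(1) qcnj_hform[OF H, of q y] by (simp add: hform_distribs g_def)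
  also have "\<dots> = 0"
    using hform_self_real[OF H, of y] by (simp add: gt tg d_def[symmetric] of_real_def scaleR_diff_left[symmetric])
  finally show "hform H (y + rscale q t) (y + rscale q t) = 0" .
qed

lemma exists_isotropic_partner:
  assumes H: "cstar H = H" and V: "right_subspace V" "nondegenerate_on H V"
    and p: "p \<in> V" "p \<noteq> 0" "hform H p p = 0"
  shows "\<exists>z\<in>V. hform H z z = 0 \<and> hform H p z \<noteq> 0"
proof -
  obtain y where y: "y \<in> V" "hform H y p \<noteq> 0"
    using V(2) p(1,2) unfolding nondegenerate_on_def by blast
  then have "hform H p y \<noteq> 0"
    using qcnj_hform[OF H, of y p] by auto
  moreover obtain t where "hform H (y + rscale p t) (y + rscale p t) = 0"
    using exists_isotropic_shift[OF H p(3) \<open>hform H p y \<noteq> 0\<close>] by blast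
  ultimately show ?thesis
    using y(1) p V(1)
    by (intro bexI[of _ "y + rscale p t"]) (simp_all add: hform_distribs right_subspace_add right_subspace_rscale)
qed

lemma lincomb_extend_eq_0_iff:
  assumes "\<forall>i<m. hform H p (P i) = 0" "hform H p z \<noteq> 0"
  shows "lincomb P m a + rscale z c = 0 \<longleftrightarrow> c = 0 \<and> lincomb P m a = 0"
proof
  assume "lincomb P m a + rscale z c = 0"
  then have "hform H p (lincomb P m a + rscale z c) = 0"
    by simp
  then have "c = 0"
    using assms by (simp add: hform_add_right hform_rscale_right hform_lincomb_right)
  then show "c = 0 \<and> lincomb P m a = 0"
    using \<open>lincomb P m a + rscale z c = 0\<close> by simp
qed simp

text \<open>\<open>P k\<close> witnesses that \<open>z\<close> is not in the span of \<open>P\<close>: it is orthogonal to that span but not to \<open>z\<close>.\<close>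

lemma congruent_families_extend:
  assumes H: "cstar H = H" and PQ: "congruent_families H V m P Q"
    and z: "z \<in> V" "z' \<in> V" "hform H z z = hform H z' z'" "\<forall>i<m. hform H (P i) z = hform H (Q i) z'"
    and k: "k < m" "\<forall>i<m. hform H (P k) (P i) = 0" "hform H (P k) z \<noteq> 0"
  shows "congruent_families H V (Suc m) (P(m := z)) (Q(m := z'))"
proof -
  have gram: "hform H (P i) (P j) = hform H (Q i) (Q j)" if "i < m" "j < m" for i j
    using PQ that by (simp add: congruent_families_def)
  have zP: "hform H z (P j) = hform H z' (Q j)" if "j < m" for j
    using z(4) that qcnj_hform[OF H, of "P j" z] qcnj_hform[OF H, of "Q j" z'] by metis
  have "\<forall>i<m. hform H (Q k) (Q i) = 0" "hform H (Q k) z' \<noteq> 0"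
    using k gram z(4) by auto
  then have "lincomb Q m a + rscale z' c = 0 \<longleftrightarrow> c = 0 \<and> lincomb Q m a = 0" for a c
    by (rule lincomb_extend_eq_0_iff)
  moreover have "lincomb P m a + rscale z c = 0 \<longleftrightarrow> c = 0 \<and> lincomb P m a = 0" for a c
    using k(2,3) by (rule lincomb_extend_eq_0_iff)
  ultimately have "lincomb (P(m := z)) (Suc m) a = 0 \<longleftrightarrow> lincomb (Q(m := z')) (Suc m) a = 0" for a
    using PQ by (simp add: lincomb_fun_upd congruent_families_def)
  moreover have "hform H ((P(m := z)) i) ((P(m := z)) j) = hform H ((Q(m := z')) i) ((Q(m := z')) j)"
    if "i < Suc m" "j < Suc m" for i j
    using that gram zP z(3,4) by (auto simp: less_Suc_eq)
  ultimately show ?thesis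
    using PQ z(1,2) by (auto simp: congruent_families_def less_Suc_eq)
qed

lemma exists_congruent_isotropic_extension:
  assumes H: "cstar H = H" and V: "right_subspace V" "nondegenerate_on H V"
    and PQ: "congruent_families H V m P Q"
    and GP: "\<And>i j. i < m \<Longrightarrow> j < m \<Longrightarrow> hform H (P i) (P j) = 0" and k: "k < m" "P k \<noteq> 0"
  shows "\<exists>z z'. congruent_families H V (Suc m) (P(m := z)) (Q(m := z')) \<and>
    hform H z z = 0 \<and> hform H (P k) z \<noteq> 0"
proof -
  have PQV: "P i \<in> V" "Q i \<in> V" if "i < m" for i
    using PQ that by (auto simp: congruent_families_def)
  have GQ: "hform H (Q i) (Q j) = 0" if "i < m" "j < m" for i j
    using GP[OF that] PQ that by (simp add: congruent_families_def)
  obtain z where z: "z \<in> V" "hform H z z = 0" "hform H (P k) z \<noteq> 0"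
    using exists_isotropic_partner[OF H V PQV(1)[OF k(1)] k(2) GP[OF k(1) k(1)]] by blast
  have "\<exists>z'\<in>V. \<forall>i<m. hform H (Q i) z' = hform H (P i) z"
  proof (rule hform_system_solvable_in[OF H V PQV(2)])
    fix a assume "lincomb Q m a = 0"
    then have "lincomb P m a = 0"
      using PQ by (simp add: congruent_families_def)
    then show "(\<Sum>i<m. hform H (P i) z * a i) = 0"
      by (simp add: hform_lincomb_left[symmetric])
  qed
  then obtain z' where z': "z' \<in> V" "\<forall>i<m. hform H (Q i) z' = hform H (P i) z"
    by blast
  have "hform H (Q k) z' \<noteq> 0"
    using z'(2) z(3) k(1) by simp
  then obtain t where t: "hform H (z' + rscale (Q k) t) (z' + rscale (Q k) t) = 0"
    using exists_isotropic_shift[OF H GQ[OF k(1) k(1)]] by blast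
  define z'' where "z'' = z' + rscale (Q k) t"
  have z'': "z'' \<in> V" "\<forall>i<m. hform H (P i) z = hform H (Q i) z''"
    using z' GQ k(1) PQV(2)[OF k(1)] V(1)
    by (auto simp: z''_def hform_distribs right_subspace_add right_subspace_rscale)
  have "congruent_families H V (Suc m) (P(m := z)) (Q(m := z''))"
    using congruent_families_extend[OF H PQ z(1) z''(1) _ z''(2) k(1) _ z(3)] GP k(1) z(2) t
    by (simp add: z''_def)
  then show ?thesis
    using z(2,3) by blast
qed

text \<open>If the span of \<open>P\<close> is totally isotropic, adjoining partners makes it anisotropic: \<open>P k + z h\<close> with
  \<open>h = [P k, z]\<close> has \<open>[P k + z h, P k + z h] = 2 |h|\<^sup>2\<close>.\<close>

lemma witt_step_isotropic:
  fixes H :: "quat^'n^'n"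
  assumes H: "cstar H = H" and V: "right_subspace V" "nondegenerate_on H V"
    and PQ: "congruent_families H V m P Q"
    and iso: "\<And>v. hform H (lincomb P m v) (lincomb P m v) = 0" and k: "k < m" "P k \<noteq> 0"
    and IH: "\<And>W m' P' Q'. right_subspace W \<Longrightarrow> nondegenerate_on H W \<Longrightarrow> dim W < dim V \<Longrightarrow>
      congruent_families H W m' P' Q' \<Longrightarrow> \<exists>U. isometry_on H W U \<and> (\<forall>i<m'. U *v P' i = Q' i)"
  shows "\<exists>U. isometry_on H V U \<and> (\<forall>i<m. U *v P i = Q i)"
proof -
  have GP: "hform H (P i) (P j) = 0" if "i < m" "j < m" for i j
    using hform_eq_0_if_totally_isotropic[OF H iso that] .
  obtain z z' where PQ2: "congruent_families H V (Suc m) (P(m := z)) (Q(m := z'))"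
    and z: "hform H z z = 0" "hform H (P k) z \<noteq> 0"
    using exists_congruent_isotropic_extension[OF H V PQ GP k] by blast
  define h where "h = hform H (P k) z"
  have "hform H z (P k) = qcnj h"
    using qcnj_hform[OF H, of "P k" z] by (simp add: h_def)
  then have "hform H (P k + rscale z h) (P k + rscale z h) = qcnj h * h + qcnj h * h"
    using GP[OF k(1) k(1)] z(1) by (simp add: hform_distribs h_def[symmetric])
  moreover define w where "w = (\<lambda>l. (if l = k then 1 else 0) + (if l = m then h else 0))"
  then have "lincomb (P(m := z)) (Suc m) w = P k + rscale z h"
    using k(1) by (simp add: lincomb_add lincomb_delta)
  moreover have "qcnj h * h + qcnj h * h \<noteq> 0"
    using z(2) qcnj_mult_self_double_eq_0_iff[of h] by (simp add: h_def)
  ultimately have "hform H (lincomb (P(m := z)) (Suc m) w) (lincomb (P(m := z)) (Suc m) w) \<noteq> 0"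
    by simp
  then obtain U where U: "isometry_on H V U" "\<forall>i<Suc m. U *v (P(m := z)) i = (Q(m := z')) i"
    using witt_step_anisotropic[OF H V PQ2 _ IH] by blast
  have "U *v P i = Q i" if "i < m" for i
    using U(2)[rule_format, of i] that by simp
  then show ?thesis
    using U(1) by blast
qed

theorem witt_extension:
  fixes H :: "quat^'n^'n"
  assumes H: "cstar H = H"
  shows "right_subspace V \<Longrightarrow> nondegenerate_on H V \<Longrightarrow> congruent_families H V m P Q \<Longrightarrow>
    \<exists>U. isometry_on H V U \<and> (\<forall>i<m. U *v P i = Q i)"
proof (induction "dim V" arbitrary: V m P Q rule: less_induct)
  case less
  note V = less.prems(1,2) and PQ = less.prems(3)
  consider (anisotropic) v where "hform H (lincomb P m v) (lincomb P m v) \<noteq> 0"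
    | (isotropic) k where "\<forall>v. hform H (lincomb P m v) (lincomb P m v) = 0" "k < m" "P k \<noteq> 0"
    | (zero) "\<forall>i<m. P i = 0"
    by blast
  then show ?case
  proof cases
    case anisotropic
    then show ?thesis
      using witt_step_anisotropic[OF H V PQ _ less.hyps] by blast
  next
    case isotropic
    then show ?thesis
      using witt_step_isotropic[OF H V PQ _ _ _ less.hyps] by blast
  next
    case zero
    have "Q i = 0" if "i < m" for i
      using PQ zero that lincomb_delta[OF that, of P 1] lincomb_delta[OF that, of Q 1]
      by (simp add: congruent_families_def)
    then show ?thesis
      using zero by (intro exI[of _ "mat 1"]) (simp add: isometry_on_def)
  qed
qed

section \<open>Polar decompositions\<close>

lemma isometry_on_UNIV_iff_H_unitary: "isometry_on H UNIV U \<longleftrightarrow> H_unitary H U"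
  by (auto simp: isometry_on_def H_unitary_def hform_matrix_vector_mult[of H U _ U, simplified]
      intro: matrix_eq_by_hform)

lemma matrix_vector_mult_axis_nth: "(M *v axis j 1) $ i = M $ i $ j"
  for M :: "'a::semiring_1^'n^'m"
  by (simp add: matrix_vector_mult_def axis_def if_distrib[of "\<lambda>z. _ * z"] cong: if_cong)

lemma matrix_eq_by_axis: "(\<And>j. M *v axis j 1 = N *v axis j 1) \<Longrightarrow> M = N"
  for M N :: "'a::semiring_1^'n^'m"
  by (metis matrix_vector_mult_axis_nth vec_eq_iff)

lemma witt_extension_matrix:
  fixes H A X :: "quat^'n^'n"
  assumes H: "cstar H = H" "nondegenerate_on H UNIV"
    and gram: "cstar A ** H ** A = cstar X ** H ** X" and ker: "qker A = qker X"
  shows "\<exists>U. H_unitary H U \<and> U ** A = X"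
proof -
  obtain js :: "'n list" where js: "set js = UNIV"
    using finite_list[OF finite_class.finite_UNIV] by blast
  define E where "E i = axis (js ! i) (1 :: quat)" for i
  define P Q where "P = (\<lambda>i. A *v E i)" and "Q = (\<lambda>i. X *v E i)"
  have "congruent_families H UNIV (length js) P Q"
    using ker by (simp add: congruent_families_def P_def Q_def hform_matrix_vector_mult gram
        matrix_vector_mult_lincomb[symmetric] qker_def set_eq_iff)
  then obtain U where U: "isometry_on H UNIV U" "\<forall>i<length js. U *v P i = Q i"
    using witt_extension[OF H(1) right_subspace_UNIV H(2)] by blast
  have "U ** A = X"
  proof (rule matrix_eq_by_axis)
    fix j :: 'n
    obtain i where i: "i < length js" "js ! i = j"
      using js by (metis UNIV_I in_set_conv_nth)
    then have "U *v P i = Q i"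
      using U(2) by blast
    then show "(U ** A) *v axis j 1 = X *v axis j 1"
      using i(2) by (simp add: P_def Q_def E_def matrix_vector_mul_assoc[symmetric])
  qed
  then show ?thesis
    using U(1) isometry_on_UNIV_iff_H_unitary by blast
qed

lemma hadj_mult_left:
  assumes "invertible H"
  shows "H ** hadj H X = cstar X ** H"
  by (simp add: hadj_def matrix_mul_assoc matrix_inv_cancel[OF assms])

lemma H_polar_decomposition_imp_square_root:
  assumes H: "invertible H" and UA: "H_polar_decomposition H X U A"
  shows "H_selfadjoint H A \<and> A ** A = hadj H X ** X \<and> qker X = qker A"
proof -
  have U: "cstar U ** H ** U = H" and A: "H_selfadjoint H A" and X: "X = U ** A"
    using UA by (auto simp: H_polar_decomposition_def H_unitary_def)
  have "hadj H X ** X = matrix_inv H ** cstar A ** (cstar U ** H ** U) ** A"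
    by (simp add: hadj_def X cstar_mult matrix_mul_assoc)
  then have "hadj H X ** X = hadj H A ** A"
    by (simp add: U hadj_def)
  moreover have "y = 0" if "U *v y = 0" for y
  proof -
    have "y = (matrix_inv H ** (cstar U ** H ** U)) *v y"
      by (simp add: U matrix_inv_cancel[OF H])
    also have "\<dots> = (matrix_inv H ** cstar U ** H) *v (U *v y)"
      by (simp add: matrix_vector_mul_assoc matrix_mul_assoc)
    finally show ?thesis
      using that by simp
  qed
  ultimately show ?thesis
    using A by (auto simp: H_selfadjoint_def qker_def X matrix_vector_mul_assoc[symmetric])
qed

theorem theorem6p1:
  fixes H X :: "quat^'n^'n"
  assumes "invertible H" and "cstar H = H"
  shows "(\<exists>U A. H_polar_decomposition H X U A) \<longleftrightarrow>
         (\<exists>A. H_selfadjoint H A \<and> A ** A = hadj H X ** X \<and> qker X = qker A)"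
proof
  assume "\<exists>U A. H_polar_decomposition H X U A"
  then show "\<exists>A. H_selfadjoint H A \<and> A ** A = hadj H X ** X \<and> qker X = qker A"
    using H_polar_decomposition_imp_square_root[OF assms(1)] by blast
next
  assume "\<exists>A. H_selfadjoint H A \<and> A ** A = hadj H X ** X \<and> qker X = qker A"
  then obtain A where A: "H_selfadjoint H A" "A ** A = hadj H X ** X" "qker X = qker A"
    by blast
  have "cstar A ** H ** A = H ** (A ** A)"
    using hadj_mult_left[OF assms(1), of A] A(1) by (simp add: H_selfadjoint_def matrix_mul_assoc)
  also have "\<dots> = cstar X ** H ** X"
    using hadj_mult_left[OF assms(1), of X] by (simp add: A(2) matrix_mul_assoc)
  finally obtain U where "H_unitary H U" "U ** A = X"
    using witt_extension_matrix[OF assms(2) nondegenerate_on_UNIV[OF assms(1)] _ A(3)[symmetric]] by blast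
  then show "\<exists>U A. H_polar_decomposition H X U A"
    using A(1) by (auto simp: H_polar_decomposition_def)
qed

end
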